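(* Let $n>k>0$ be integers and let $A$ be a $k$-splitting of $Q_2^n$. Then for every fixed direction, the number of $(n-k)$-faces in $A$ having this direction is even.
   Context: $Q_2^n=\{0,1\}^n$. For $0\le m\le n$, an $m$-face of $Q_2^n$ is given by a tuple $a=(a_1,\dots,a_n)\in\{0,1,*\}^n$ with exactly $m$ entries equal to $*$; it denotes the set $\{x\in Q_2^n : x_i=a_i \text{ whenever } a_i\in\{0,1\}\}$. The direction of a face is the set of positions of its asterisks. A $k$-splitting of $Q_2^n$ is a collection of exactly $2^k$ $(n-k)$-faces whose union is $Q_2^n$ (equivalently, a partition of $Q_2^n$ into $(n-k)$-faces). *)

theory Defs
  imports Main
begin

text \<open>Vertices of Q_2^n: 0/1 lists of length n (False = 0, True = 1).
  Faces: lists over {0,1,*} of length n, encoded as bool option lists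
  (None = *, Some False = 0, Some True = 1).\<close>

definition cube :: "nat \<Rightarrow> bool list set" where
  "cube n = {x. length x = n}"

definition face_set :: "bool option list \<Rightarrow> bool list set" where
  "face_set a = {x. length x = length a \<and>
      (\<forall>i < length a. a ! i \<noteq> None \<longrightarrow> x ! i = the (a ! i))}"

definition direction :: "bool option list \<Rightarrow> nat set" where
  "direction a = {i. i < length a \<and> a ! i = None}"

definition is_face :: "nat \<Rightarrow> nat \<Rightarrow> bool option list \<Rightarrow> bool" where
  "is_face n m a \<longleftrightarrow> length a = n \<and> card (direction a) = m"

definition is_splitting :: "nat \<Rightarrow> nat \<Rightarrow> bool option list set \<Rightarrow> bool" where
  "is_splitting n k A \<longleftrightarrow>
     (\<forall>a \<in> A. is_face n (n - k) a) \<and> finite A \<and> card A = 2 ^ k \<and>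
     (\<Union>a \<in> A. face_set a) = cube n"

end

theory Submission
  imports Defs
begin

text \<open>Fix a direction D and let S be the complementary set of coordinates, so |S| = k > 0.
  The character x \<mapsto> (-1)^(\<Sum>i\<in>S. x_i) sums to 0 over the cube, and, because a splitting
  is a partition (its face sizes add up to 2^n), this sum splits into sums over the faces.
  A face whose direction meets S is invariant under flipping a coordinate of S, which negates the
  character, so its sum is 0. The other faces are exactly those of direction D, and on each of
  them the character is a constant \<plusminus>1, so each contributes \<plusminus>2^(n-k). Hence a sum of
  \<plusminus>1 over the faces of direction D vanishes, and their number is even.\<close>

definition flip_bit :: "nat \<Rightarrow> bool list \<Rightarrow> bool list" where
  "flip_bit j x = x[j := \<not> x ! j]"

definition walsh :: "nat set \<Rightarrow> bool list \<Rightarrow> int" where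
  "walsh S x = (\<Prod>i\<in>S. if x ! i then -1 else 1)"

definition min_vertex :: "bool option list \<Rightarrow> bool list" where
  "min_vertex a = map (\<lambda>c. c = Some True) a"

lemma sum_eq_0_if_sign_reversing_involution:
  fixes g :: "'a \<Rightarrow> 'b::linordered_ab_group_add"
  assumes "\<And>x. x \<in> F \<Longrightarrow> f x \<in> F" and "\<And>x. x \<in> F \<Longrightarrow> f (f x) = x"
    and "\<And>x. x \<in> F \<Longrightarrow> g (f x) = - g x"
  shows "sum g F = 0"
proof -
  have "bij_betw f F F"
    by (rule bij_betw_byWitness[where f'=f]) (use assms in auto)
  then have "sum g F = sum (g \<circ> f) F"
    by (simp add: sum.reindex_bij_betw)
  also have "\<dots> = - sum g F"
    using assms(3) by (simp add: sum_negf[symmetric])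
  finally show ?thesis
    by simp
qed

lemma sum_over_exact_cover:
  fixes f :: "'a \<Rightarrow> 'b::comm_monoid_add"
  assumes "finite U" and "finite A" and sub: "\<And>a. a \<in> A \<Longrightarrow> F a \<subseteq> U"
    and cover: "(\<Union>a\<in>A. F a) = U" and card_sum: "(\<Sum>a\<in>A. card (F a)) = card U"
  shows "sum f U = (\<Sum>a\<in>A. sum f (F a))"
proof -
  define covering where "covering x = {a \<in> A. x \<in> F a}" for x
  have restrict: "U \<inter> F a = F a" if "a \<in> A" for a
    using sub[OF that] by blast
  have "(\<Sum>x\<in>U. card (covering x)) = (\<Sum>x\<in>U. \<Sum>a\<in>A. of_bool (x \<in> F a))"
    using \<open>finite A\<close> by (simp add: covering_def Collect_conj_eq)
  also have "\<dots> = (\<Sum>a\<in>A. \<Sum>x\<in>U. of_bool (x \<in> F a))"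
    by (rule sum.swap)
  also have "\<dots> = (\<Sum>a\<in>A. card (F a))"
    using \<open>finite U\<close> by (intro sum.cong) (simp_all add: restrict)
  finally have "(\<Sum>x\<in>U. card (covering x)) = (\<Sum>x\<in>U. 1)"
    using card_sum by simp
  moreover have "1 \<le> card (covering x)" if "x \<in> U" for x
    using that cover \<open>finite A\<close> by (auto simp: covering_def Suc_le_eq card_gt_0_iff)
  ultimately have covered_once: "card (covering x) = 1" if "x \<in> U" for x
    using sum_mono_inv[of "\<lambda>_. 1" U] that by (metis \<open>finite U\<close>)
  have single: "(\<Sum>a\<in>A. if x \<in> F a then f x else 0) = f x" if x: "x \<in> U" for x
  proof -
    obtain a where "covering x = {a}"
      using covered_once[OF x] by (rule card_1_singletonE)
    then show ?thesis
      using \<open>finite A\<close> by (simp add: covering_def sum.inter_filter[symmetric])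
  qed
  have "(\<Sum>a\<in>A. sum f (F a)) = (\<Sum>x\<in>U. \<Sum>a\<in>A. if x \<in> F a then f x else 0)"
    by (subst sum.swap) (rule sum.cong; simp add: sum.inter_restrict[OF \<open>finite U\<close>, symmetric] restrict)
  also have "\<dots> = sum f U"
    by (simp add: single)
  finally show ?thesis ..
qed

lemma even_sum_signs_iff_even_card:
  fixes c :: "'a \<Rightarrow> int"
  assumes "finite B" and "\<forall>b\<in>B. c b = 1 \<or> c b = -1"
  shows "even (sum c B) \<longleftrightarrow> even (card B)"
  using assms by (induction B rule: finite_induct) auto

lemma walsh_eq_1_or_minus_1: "walsh S x = 1 \<or> walsh S x = -1"
proof (cases "finite S")
  case True
  then show ?thesis
    unfolding walsh_def by (induction S rule: finite_induct) auto
qed (simp add: walsh_def)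

lemma walsh_flip_bit:
  assumes "finite S" and "j \<in> S" and "j < length x"
  shows "walsh S (flip_bit j x) = - walsh S x"
proof -
  have "(\<Prod>i\<in>S - {j}. if flip_bit j x ! i then -1 else 1) = (\<Prod>i\<in>S - {j}. if x ! i then -1 else (1::int))"
    by (rule prod.cong) (auto simp: flip_bit_def)
  with assms show ?thesis
    unfolding walsh_def by (simp add: prod.remove flip_bit_def)
qed

lemma flip_bit_flip_bit [simp]: "j < length x \<Longrightarrow> flip_bit j (flip_bit j x) = x"
  by (simp add: flip_bit_def)

lemma finite_cube: "finite (cube n)"
  using finite_lists_length_eq[of "UNIV :: bool set" n] by (simp add: cube_def)

lemma card_cube: "card (cube n) = 2 ^ n"
  using card_lists_length_eq[of "UNIV :: bool set" n] by (simp add: cube_def)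

lemma face_set_replicate_None: "face_set (replicate n None) = cube n"
  by (auto simp: face_set_def cube_def)

lemma face_set_subset_cube: "face_set a \<subseteq> cube (length a)"
  by (auto simp: face_set_def cube_def)

lemma finite_face_set: "finite (face_set a)"
  using finite_subset[OF face_set_subset_cube finite_cube] .

lemma face_set_Cons: "face_set (c # a) = {y # x | y x. x \<in> face_set a \<and> (c \<noteq> None \<longrightarrow> y = the c)}"
  by (auto simp: face_set_def All_less_Suc2 length_Suc_conv)

lemma direction_Cons: "direction (c # a) = (if c = None then {0} else {}) \<union> Suc ` direction a"
  by (auto simp: direction_def gr0_conv_Suc image_iff less_Suc_eq_0_disj)

lemma finite_direction: "finite (direction a)"
  by (simp add: direction_def)

lemma card_face_set: "card (face_set a) = 2 ^ card (direction a)"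
proof (induction a)
  case Nil
  then show ?case
    by (simp add: face_set_def direction_def)
next
  case (Cons c a)
  show ?case
  proof (cases c)
    case None
    have "face_set (c # a) = Cons True ` face_set a \<union> Cons False ` face_set a"
      using None by (auto simp: face_set_Cons)
    moreover have "Cons True ` face_set a \<inter> Cons False ` face_set a = {}"
      by auto
    ultimately have "card (face_set (c # a)) = 2 * card (face_set a)"
      by (simp add: card_Un_disjoint finite_face_set card_image)
    moreover have "direction (c # a) = insert 0 (Suc ` direction a)"
      using None by (simp add: direction_Cons)
    then have "card (direction (c # a)) = Suc (card (direction a))"
      by (simp add: finite_direction card_image)
    ultimately show ?thesis
      using Cons.IH by simp
  next
    case (Some b)
    then have "face_set (c # a) = Cons b ` face_set a" and "direction (c # a) = Suc ` direction a"
      by (auto simp: face_set_Cons direction_Cons)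
    then show ?thesis
      using Cons by (simp add: card_image)
  qed
qed

lemma flip_bit_in_face_set:
  assumes "x \<in> face_set a" and "i \<in> direction a"
  shows "flip_bit i x \<in> face_set a"
  using assms by (auto simp: face_set_def direction_def flip_bit_def nth_list_update)

lemma sum_walsh_face_set_free_coordinate:
  assumes "finite S" and "i \<in> S" and "i \<in> direction a"
  shows "(\<Sum>x\<in>face_set a. walsh S x) = 0"
proof (rule sum_eq_0_if_sign_reversing_involution)
  fix x
  assume x: "x \<in> face_set a"
  then have "i < length x"
    using assms(3) by (simp add: face_set_def direction_def)
  then show "flip_bit i x \<in> face_set a" and "flip_bit i (flip_bit i x) = x"
    and "walsh S (flip_bit i x) = - walsh S x"
    using x assms by (simp_all add: flip_bit_in_face_set walsh_flip_bit)
qed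

lemma sum_walsh_cube:
  assumes "finite S" and "i \<in> S" and "i < n"
  shows "(\<Sum>x\<in>cube n. walsh S x) = 0"
  using sum_walsh_face_set_free_coordinate[OF assms(1,2), of "replicate n None"] assms(3)
  by (simp add: face_set_replicate_None direction_def)

lemma sum_walsh_face_set_fixed_coordinates:
  assumes "S \<inter> direction a = {}" and "S \<subseteq> {..<length a}"
  shows "(\<Sum>x\<in>face_set a. walsh S x) = 2 ^ card (direction a) * walsh S (min_vertex a)"
proof -
  have "walsh S x = walsh S (min_vertex a)" if "x \<in> face_set a" for x
    unfolding walsh_def
  proof (rule prod.cong)
    fix i
    assume "i \<in> S"
    with assms have "i < length a" and "a ! i \<noteq> None"
      by (auto simp: direction_def)
    with that have "x ! i = (min_vertex a ! i)"
      by (auto simp: face_set_def min_vertex_def)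
    then show "(if x ! i then -1 else 1) = (if min_vertex a ! i then -1 else (1::int))"
      by simp
  qed simp
  then show ?thesis
    by (simp add: card_face_set)
qed

lemma splitting_sum:
  fixes f :: "bool list \<Rightarrow> 'b::comm_monoid_add"
  assumes "is_splitting n k A" and "k \<le> n"
  shows "sum f (cube n) = (\<Sum>a\<in>A. sum f (face_set a))"
proof (rule sum_over_exact_cover)
  have "(\<Sum>a\<in>A. card (face_set a)) = 2 ^ k * 2 ^ (n - k)"
    using assms(1) by (simp add: is_splitting_def is_face_def card_face_set)
  also have "\<dots> = card (cube n)"
    using assms(2) by (simp add: card_cube flip: power_add)
  finally show "(\<Sum>a\<in>A. card (face_set a)) = card (cube n)" .
qed (use assms(1) face_set_subset_cube finite_cube in \<open>auto simp: is_splitting_def is_face_def\<close>)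

lemma splitting_signed_count_eq_0:
  assumes split: "is_splitting n k A" and "0 < k" and "k \<le> n"
    and D: "D \<subseteq> {..<n}" "card D = n - k"
  shows "(\<Sum>a\<in>{a\<in>A. direction a = D}. walsh ({..<n} - D) (min_vertex a)) = 0"
proof -
  define S where "S = {..<n} - D"
  have faces: "length a = n" "card (direction a) = n - k" if "a \<in> A" for a
    using split that by (auto simp: is_splitting_def is_face_def)
  have "card S = k"
    using D \<open>k \<le> n\<close> by (simp add: S_def card_Diff_subset finite_subset)
  then obtain j where "j \<in> S"
    using \<open>0 < k\<close> by fastforce
  have face_sum: "(\<Sum>x\<in>face_set a. walsh S x)
      = (if direction a = D then 2 ^ (n - k) * walsh S (min_vertex a) else 0)" if "a \<in> A" for a
  proof (cases "direction a = D")
    case True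
    then show ?thesis
      using faces[OF that] sum_walsh_face_set_fixed_coordinates[of S a] by (auto simp: S_def)
  next
    case False
    have "direction a \<subseteq> {..<n}"
      using faces(1)[OF that] by (auto simp: direction_def)
    moreover have "\<not> direction a \<subseteq> D"
    proof
      assume "direction a \<subseteq> D"
      moreover have "finite D"
        using D(1) finite_subset by blast
      ultimately show False
        using False card_subset_eq D(2) faces(2)[OF that] by metis
    qed
    ultimately obtain i where "i \<in> S" "i \<in> direction a"
      by (auto simp: S_def)
    then show ?thesis
      using False sum_walsh_face_set_free_coordinate by (simp add: S_def)
  qed
  have "0 = (\<Sum>x\<in>cube n. walsh S x)"
    using sum_walsh_cube \<open>j \<in> S\<close> by (simp add: S_def)
  also have "\<dots> = (\<Sum>a\<in>A. if direction a = D then 2 ^ (n - k) * walsh S (min_vertex a) else 0)"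
    unfolding splitting_sum[OF split \<open>k \<le> n\<close>] by (rule sum.cong) (simp_all add: face_sum)
  also have "\<dots> = (\<Sum>a\<in>{a\<in>A. direction a = D}. 2 ^ (n - k) * walsh S (min_vertex a))"
    using split by (simp add: is_splitting_def sum.inter_filter)
  also have "\<dots> = 2 ^ (n - k) * (\<Sum>a\<in>{a\<in>A. direction a = D}. walsh S (min_vertex a))"
    by (simp add: sum_distrib_left)
  finally show ?thesis
    by (simp add: S_def)
qed

theorem proposition5:
  fixes n k :: nat and A :: "bool option list set"
  assumes "0 < k" and "k < n" and "is_splitting n k A"
  shows "\<forall>D. even (card {a \<in> A. direction a = D})"
proof
  fix D
  show "even (card {a \<in> A. direction a = D})"
  proof (cases "{a \<in> A. direction a = D} = {}")
    case False
    then obtain a where "a \<in> A" and a_dir: "direction a = D"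
      by auto
    with assms(3) have "length a = n" and D_card: "card D = n - k"
      by (auto simp: is_splitting_def is_face_def)
    with a_dir have "D \<subseteq> {..<n}"
      by (auto simp: direction_def)
    from splitting_signed_count_eq_0[OF assms(3,1) less_imp_le[OF assms(2)] this D_card]
    have "(\<Sum>a\<in>{a\<in>A. direction a = D}. walsh ({..<n} - D) (min_vertex a)) = 0" .
    moreover have "finite {a \<in> A. direction a = D}"
      using assms(3) by (simp add: is_splitting_def)
    then have "even (\<Sum>a\<in>{a\<in>A. direction a = D}. walsh ({..<n} - D) (min_vertex a))
        \<longleftrightarrow> even (card {a \<in> A. direction a = D})"
      by (rule even_sum_signs_iff_even_card) (simp add: walsh_eq_1_or_minus_1)
    ultimately show ?thesis
      by simp
  qed (simp only: card.empty even_zero)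
qed

end
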